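(* Let $m=1$ (so $Y=W_2\times W_3$). For $h\in\mathbb{R}[T]$, the real circle form $\mu_h=\varphi_h\circ\mu_0$ is equivalent to $\mu_0$ if and only if $h(0)=0$. In particular, $\mu_0$ and $\mu_1$ (the form for the constant polynomial $h=1$) are inequivalent, and the forms $\mu_h$, $h\in\mathbb{R}[T]$, fall into exactly two equivalence classes.
   Context: For $k\ge1$, $W_k=\mathbb{C}^2$ is the $\mathbb{C}^*$-module with weights $(k,-k)$: $t\cdot(x,y)=(t^kx,t^{-k}y)$. Here $n=3$ and $Y=W_2\times W_3$ with coordinates $(a,b,x,y)$, $t\cdot(a,b,x,y)=(t^2a,t^{-2}b,t^3x,t^{-3}y)$. Let $\sigma(t)=\overline{t}^{-1}$ on $\mathbb{C}^*$. A real circle form on $Y$ is an antiholomorphic involution $\mu$ of $Y$ with $\mu(t\cdot p)=\sigma(t)\cdot\mu(p)$; two such forms $\mu_1,\mu_2$ are equivalent if $\mu_2=\psi\circ\mu_1\circ\psi^{-1}$ for some regular $\mathbb{C}^*$-equivariant automorphism $\psi$ of $Y$. Let $\mu_0(a,b,x,y)=(\overline{b},\overline{a},\overline{y},\overline{x})$, $T=ab$, and for $h\in\mathbb{R}[T]$ let $M_h=\begin{pmatrix}1-Th^2 & a^nh^n\\ -b^nh^n & \sum_{j=0}^{n-1}(Th^2)^j\end{pmatrix}$ (with $h=h(ab)$), $\varphi_h(a,b,x,y)=(a,b,M_h\binom{x}{y})$, and $\mu_h=\varphi_h\circ\mu_0$. *)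

theory Defs
  imports Complex_Main "HOL-Computational_Algebra.Polynomial"
begin

text \<open>The variety Y = W_2 x W_3 = C^4 with coordinates (a,b,x,y).\<close>
type_synonym Y = "complex \<times> complex \<times> complex \<times> complex"

definition act :: "complex \<Rightarrow> Y \<Rightarrow> Y" where
  "act t p = (case p of (a,b,x,y) \<Rightarrow>
      (t^2 * a, inverse t ^ 2 * b, t^3 * x, inverse t ^ 3 * y))"

definition sigma :: "complex \<Rightarrow> complex" where
  "sigma t = inverse (cnj t)"

inductive_set regular_fun :: "(Y \<Rightarrow> complex) set" where
  const: "(\<lambda>p. c) \<in> regular_fun"
| coord_a: "(\<lambda>(a,b,x,y). a) \<in> regular_fun"
| coord_b: "(\<lambda>(a,b,x,y). b) \<in> regular_fun"
| coord_x: "(\<lambda>(a,b,x,y). x) \<in> regular_fun"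
| coord_y: "(\<lambda>(a,b,x,y). y) \<in> regular_fun"
| add: "f \<in> regular_fun \<Longrightarrow> g \<in> regular_fun \<Longrightarrow> (\<lambda>p. f p + g p) \<in> regular_fun"
| mult: "f \<in> regular_fun \<Longrightarrow> g \<in> regular_fun \<Longrightarrow> (\<lambda>p. f p * g p) \<in> regular_fun"

definition regular_map :: "(Y \<Rightarrow> Y) \<Rightarrow> bool" where
  "regular_map \<psi> \<longleftrightarrow>
     (\<lambda>p. fst (\<psi> p)) \<in> regular_fun \<and>
     (\<lambda>p. fst (snd (\<psi> p))) \<in> regular_fun \<and>
     (\<lambda>p. fst (snd (snd (\<psi> p)))) \<in> regular_fun \<and>
     (\<lambda>p. snd (snd (snd (\<psi> p)))) \<in> regular_fun"

definition regular_automorphism :: "(Y \<Rightarrow> Y) \<Rightarrow> bool" where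
  "regular_automorphism \<psi> \<longleftrightarrow> bij \<psi> \<and> regular_map \<psi> \<and> regular_map (inv \<psi>)"

definition equivariant :: "(Y \<Rightarrow> Y) \<Rightarrow> bool" where
  "equivariant \<psi> \<longleftrightarrow> (\<forall>t p. t \<noteq> 0 \<longrightarrow> \<psi> (act t p) = act t (\<psi> p))"

definition antiregular_map :: "(Y \<Rightarrow> Y) \<Rightarrow> bool" where
  "antiregular_map \<mu> \<longleftrightarrow>
     regular_map (\<lambda>p. case \<mu> p of (a,b,x,y) \<Rightarrow> (cnj a, cnj b, cnj x, cnj y))"

definition real_circle_form :: "(Y \<Rightarrow> Y) \<Rightarrow> bool" where
  "real_circle_form \<mu> \<longleftrightarrow> antiregular_map \<mu> \<and> \<mu> \<circ> \<mu> = id \<and>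
     (\<forall>t p. t \<noteq> 0 \<longrightarrow> \<mu> (act t p) = act (sigma t) (\<mu> p))"

definition forms_equivalent :: "(Y \<Rightarrow> Y) \<Rightarrow> (Y \<Rightarrow> Y) \<Rightarrow> bool" where
  "forms_equivalent \<mu>1 \<mu>2 \<longleftrightarrow>
     (\<exists>\<psi>. regular_automorphism \<psi> \<and> equivariant \<psi> \<and> \<mu>2 = \<psi> \<circ> \<mu>1 \<circ> inv \<psi>)"

definition mu0 :: "Y \<Rightarrow> Y" where
  "mu0 p = (case p of (a,b,x,y) \<Rightarrow> (cnj b, cnj a, cnj y, cnj x))"

text \<open>n = 3.  M_h with h evaluated at T = ab (h a real polynomial).\<close>
definition phi :: "real poly \<Rightarrow> Y \<Rightarrow> Y" where
  "phi h p = (case p of (a,b,x,y) \<Rightarrow>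
     (let T = a * b; hh = poly (map_poly complex_of_real h) T;
          m11 = 1 - T * hh^2; m12 = a^3 * hh^3;
          m21 = - (b^3 * hh^3); m22 = (\<Sum>j<3. (T * hh^2)^j)
      in (a, b, m11 * x + m12 * y, m21 * x + m22 * y)))"

definition mu :: "real poly \<Rightarrow> Y \<Rightarrow> Y" where
  "mu h = phi h \<circ> mu0"

end

theory Submission
  imports Defs "HOL-Computational_Algebra.Fundamental_Theorem_Algebra"
begin

text \<open>Forms \<mu>_h and \<mu>_h' with h(0) = h'(0) are conjugate by an explicit matrix over \<complex>[T] of
  determinant 1, and rescaling (a, b) normalises a nonzero h(0) to 1; so there are at most
  two classes. Conversely, let an equivariant regular automorphism \<psi> conjugate \<mu>_h to \<mu>_0.
  Linearising \<psi> in the fibre directions (x, y) over the diagonal points (s, s, 0, 0) gives a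
  polynomial matrix [[\<alpha>, \<beta>], [\<gamma>, \<delta>]] whose determinant never vanishes and is therefore
  constant. Equivariance makes \<alpha> even and \<beta> odd with vanishing linear term, while the
  intertwining relation, read at real s, expresses \<gamma> and \<delta> through the conjugates of \<alpha>
  and \<beta>; the determinant becomes |w_even|^2 - |w_odd|^2 with w_even even and w_odd odd.
  Comparing degrees modulo 4 forces w_odd = 0, and the linear coefficient of w_odd is
  \<alpha>(0) h(0). As \<beta>(0) = 0 and the determinant is nonzero at 0, h(0) = 0.\<close>

section \<open>Polynomials\<close>

lemma coeff_mult_1: "coeff (p * q) 1 = coeff p 0 * coeff q 1 + coeff p 1 * coeff q 0"
  by (simp add: coeff_mult)

lemma poly_eqI_infinite:
  fixes p q :: "'a::idom poly"
  assumes "infinite S" and "\<And>z. z \<in> S \<Longrightarrow> poly p z = poly q z"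
  shows "p = q"
proof (rule ccontr)
  assume "p \<noteq> q"
  then have "finite {z. poly (p - q) z = 0}"
    by (intro poly_roots_finite) simp
  moreover have "S \<subseteq> {z. poly (p - q) z = 0}"
    using assms(2) by auto
  ultimately show False
    using assms(1) finite_subset by blast
qed

lemma infinite_Reals: "infinite (\<real> :: 'a::real_algebra_1 set)"
proof
  assume "finite (\<real> :: 'a set)"
  then have "finite (UNIV :: real set)"
    unfolding Reals_def using finite_imageD inj_of_real by blast
  then show False
    using infinite_UNIV_char_0 by blast
qed

lemma coeff_even_poly:
  fixes p :: "'a::{idom,ring_char_0} poly"
  assumes "\<And>z. poly p (-z) = poly p z" and "odd n"
  shows "coeff p n = 0"
proof -
  have "pcompose p [:0, -1:] = p"
    by (simp add: poly_eq_poly_eq_iff[symmetric] fun_eq_iff poly_pcompose assms(1))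
  then have "coeff p n = - coeff p n"
    using coeff_pcompose_linear[of p "-1" n] assms(2) by simp
  then show ?thesis by simp
qed

lemma coeff_odd_poly:
  fixes p :: "'a::{idom,ring_char_0} poly"
  assumes "\<And>z. poly p (-z) = - poly p z" and "even n"
  shows "coeff p n = 0"
proof -
  have "pcompose p [:0, -1:] = - p"
    by (simp add: poly_eq_poly_eq_iff[symmetric] fun_eq_iff poly_pcompose assms(1))
  then have "- coeff p n = coeff p n"
    using coeff_pcompose_linear[of p "-1" n] assms(2) by simp
  then show ?thesis by simp
qed

lemma degree_even_poly:
  fixes p :: "'a::{idom,ring_char_0} poly"
  assumes "\<And>z. poly p (-z) = poly p z"
  shows "even (degree p)"
  using coeff_even_poly[OF assms, of "degree p"] by (cases "p = 0") auto

lemma degree_odd_poly: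
  fixes p :: "'a::{idom,ring_char_0} poly"
  assumes "\<And>z. poly p (-z) = - poly p z" and "p \<noteq> 0"
  shows "odd (degree p)"
  using coeff_odd_poly[OF assms(1), of "degree p"] assms(2) by auto

definition herm_square :: "complex poly \<Rightarrow> complex poly"
  where "herm_square p = p * map_poly cnj p"

lemma poly_herm_square_of_real:
  "poly (herm_square p) (of_real r) = poly p (of_real r) * cnj (poly p (of_real r))"
  by (simp add: herm_square_def)

lemma degree_herm_square: "degree (herm_square p) = 2 * degree p"
proof (cases "p = 0")
  case False
  moreover have "degree (map_poly cnj p) = degree p"
    by (rule degree_map_poly) simp
  ultimately show ?thesis
    by (simp add: herm_square_def degree_mult_eq map_poly_eq_0_iff)
qed (simp add: herm_square_def)

text \<open>The degrees of the two squares are distinct modulo 4, so their difference cannot be constant.\<close>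
lemma herm_square_diff_even_odd:
  assumes "\<And>z. poly p (-z) = poly p z" and "\<And>z. poly q (-z) = - poly q z"
    and "degree (herm_square p - herm_square q) = 0"
  shows "q = 0"
proof (rule ccontr)
  assume "q \<noteq> 0"
  then have odd: "odd (degree q)"
    using degree_odd_poly assms(2) by blast
  moreover have "even (degree p)"
    using degree_even_poly assms(1) by blast
  ultimately have "degree (herm_square p) \<noteq> degree (herm_square q)"
    by (auto simp: degree_herm_square)
  then have "degree (herm_square p - herm_square q) \<ge> degree (herm_square q)"
    using degree_add_eq_left[of "- herm_square q" "herm_square p"]
      degree_add_eq_right[of "herm_square p" "- herm_square q"]
    by (cases "degree (herm_square p) < degree (herm_square q)") auto
  moreover have "degree (herm_square q) > 0"
    using odd by (simp add: degree_herm_square odd_pos)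
  ultimately show False
    using assms(3) by simp
qed

lemma singular_2x2_kernel:
  fixes a b c d :: "'a::field"
  assumes "a * d - b * c = 0"
  obtains X Y where "X \<noteq> 0 \<or> Y \<noteq> 0" "a * X + b * Y = 0" "c * X + d * Y = 0"
proof (cases "c \<noteq> 0 \<or> d \<noteq> 0")
  case True
  with assms show ?thesis
    by (intro that[of d "- c"]) (auto simp: algebra_simps)
next
  case False
  then show ?thesis
    by (cases "a \<noteq> 0 \<or> b \<noteq> 0") (auto intro: that[of b "- a"] that[of 1 0] simp: algebra_simps)
qed

section \<open>Regular functions and their jets\<close>

lemma regular_fun_coords:
  "(\<lambda>p. fst p) \<in> regular_fun" "(\<lambda>p. fst (snd p)) \<in> regular_fun"
  "(\<lambda>p. fst (snd (snd p))) \<in> regular_fun" "(\<lambda>p. snd (snd (snd p))) \<in> regular_fun"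
  by (fact regular_fun.coord_a[unfolded case_prod_beta] regular_fun.coord_b[unfolded case_prod_beta]
    regular_fun.coord_x[unfolded case_prod_beta] regular_fun.coord_y[unfolded case_prod_beta])+

lemma regular_fun_diff:
  assumes "f \<in> regular_fun" "g \<in> regular_fun"
  shows "(\<lambda>p. f p - g p) \<in> regular_fun"
proof -
  have "(\<lambda>p. f p + (-1) * g p) \<in> regular_fun"
    by (intro regular_fun.add regular_fun.mult regular_fun.const assms)
  then show ?thesis by simp
qed

lemma regular_fun_power: "f \<in> regular_fun \<Longrightarrow> (\<lambda>p. f p ^ n) \<in> regular_fun"
  by (induction n) (auto intro: regular_fun.const regular_fun.mult)

lemma regular_fun_poly: "f \<in> regular_fun \<Longrightarrow> (\<lambda>p. poly P (f p)) \<in> regular_fun"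
  by (induction P) (auto intro: regular_fun.const regular_fun.mult regular_fun.add)

lemmas regular_fun_closed = regular_fun.const regular_fun.add regular_fun.mult regular_fun_diff
  regular_fun_power regular_fun_poly regular_fun_coords

lemma regular_fun_comp: "f \<in> regular_fun \<Longrightarrow> regular_map \<psi> \<Longrightarrow> (\<lambda>p. f (\<psi> p)) \<in> regular_fun"
  by (induction rule: regular_fun.induct)
    (auto simp: regular_map_def case_prod_beta
      intro: regular_fun.const regular_fun.add regular_fun.mult)

lemma regular_map_comp: "regular_map \<phi> \<Longrightarrow> regular_map \<psi> \<Longrightarrow> regular_map (\<psi> \<circ> \<phi>)"
  using regular_fun_comp[of _ \<phi>] by (auto simp: regular_map_def)

definition curve :: "complex poly \<Rightarrow> complex poly \<Rightarrow> complex poly \<Rightarrow> complex poly \<Rightarrow> complex \<Rightarrow> Y"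
  where "curve ca cb cx cy e = (poly ca e, poly cb e, poly cx e, poly cy e)"

definition chain_rule_term :: "(Y \<Rightarrow> complex) \<Rightarrow> (Y \<Rightarrow> complex) \<Rightarrow> (Y \<Rightarrow> complex) \<Rightarrow> (Y \<Rightarrow> complex) \<Rightarrow>
    complex poly \<Rightarrow> complex poly \<Rightarrow> complex poly \<Rightarrow> complex poly \<Rightarrow> complex"
  where "chain_rule_term Da Db Dx Dy ca cb cx cy = (let p0 = curve ca cb cx cy 0 in
    Da p0 * coeff ca 1 + Db p0 * coeff cb 1 + Dx p0 * coeff cx 1 + Dy p0 * coeff cy 1)"

text \<open>Da, Db, Dx, Dy play the role of the partial derivatives of f: by the chain rule they give
  the linear Taylor coefficient of f along every polynomial curve.\<close>
definition has_jet ::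
  "(Y \<Rightarrow> complex) \<Rightarrow> (Y \<Rightarrow> complex) \<Rightarrow> (Y \<Rightarrow> complex) \<Rightarrow> (Y \<Rightarrow> complex) \<Rightarrow> (Y \<Rightarrow> complex) \<Rightarrow> bool"
  where "has_jet f Da Db Dx Dy \<longleftrightarrow> (\<forall>ca cb cx cy. \<exists>q.
     (\<forall>e. f (curve ca cb cx cy e) = poly q e) \<and> coeff q 1 = chain_rule_term Da Db Dx Dy ca cb cx cy)"

lemma has_jet_const: "has_jet (\<lambda>p. c) (\<lambda>_. 0) (\<lambda>_. 0) (\<lambda>_. 0) (\<lambda>_. 0)"
  unfolding has_jet_def chain_rule_term_def by (auto intro!: exI[of _ "[:c:]"])

lemma has_jet_coords:
  "has_jet (\<lambda>(a,b,x,y). a) (\<lambda>_. 1) (\<lambda>_. 0) (\<lambda>_. 0) (\<lambda>_. 0)"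
  "has_jet (\<lambda>(a,b,x,y). b) (\<lambda>_. 0) (\<lambda>_. 1) (\<lambda>_. 0) (\<lambda>_. 0)"
  "has_jet (\<lambda>(a,b,x,y). x) (\<lambda>_. 0) (\<lambda>_. 0) (\<lambda>_. 1) (\<lambda>_. 0)"
  "has_jet (\<lambda>(a,b,x,y). y) (\<lambda>_. 0) (\<lambda>_. 0) (\<lambda>_. 0) (\<lambda>_. 1)"
  unfolding has_jet_def chain_rule_term_def curve_def by (simp_all add: Let_def) blast+

lemma has_jet_add:
  assumes f: "has_jet f Da Db Dx Dy" and g: "has_jet g Ga Gb Gx Gy"
  shows "has_jet (\<lambda>p. f p + g p)
    (\<lambda>p. Da p + Ga p) (\<lambda>p. Db p + Gb p) (\<lambda>p. Dx p + Gx p) (\<lambda>p. Dy p + Gy p)"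
  unfolding has_jet_def
proof (intro allI)
  fix ca cb cx cy
  obtain q1 q2 where
    "\<forall>e. f (curve ca cb cx cy e) = poly q1 e" "coeff q1 1 = chain_rule_term Da Db Dx Dy ca cb cx cy"
    "\<forall>e. g (curve ca cb cx cy e) = poly q2 e" "coeff q2 1 = chain_rule_term Ga Gb Gx Gy ca cb cx cy"
    using f g unfolding has_jet_def by meson
  then show "\<exists>q. (\<forall>e. f (curve ca cb cx cy e) + g (curve ca cb cx cy e) = poly q e) \<and>
      coeff q 1 = chain_rule_term (\<lambda>p. Da p + Ga p) (\<lambda>p. Db p + Gb p) (\<lambda>p. Dx p + Gx p)
        (\<lambda>p. Dy p + Gy p) ca cb cx cy"
    by (intro exI[of _ "q1 + q2"]) (simp add: chain_rule_term_def Let_def algebra_simps)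
qed

lemma has_jet_mult:
  assumes f: "has_jet f Da Db Dx Dy" and g: "has_jet g Ga Gb Gx Gy"
  shows "has_jet (\<lambda>p. f p * g p) (\<lambda>p. f p * Ga p + g p * Da p) (\<lambda>p. f p * Gb p + g p * Db p)
    (\<lambda>p. f p * Gx p + g p * Dx p) (\<lambda>p. f p * Gy p + g p * Dy p)"
  unfolding has_jet_def
proof (intro allI)
  fix ca cb cx cy
  obtain q1 q2 where
    q1: "\<forall>e. f (curve ca cb cx cy e) = poly q1 e"
      "coeff q1 1 = chain_rule_term Da Db Dx Dy ca cb cx cy" and
    q2: "\<forall>e. g (curve ca cb cx cy e) = poly q2 e"
      "coeff q2 1 = chain_rule_term Ga Gb Gx Gy ca cb cx cy"
    using f g unfolding has_jet_def by meson
  have "coeff q1 0 = f (curve ca cb cx cy 0)" "coeff q2 0 = g (curve ca cb cx cy 0)"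
    using q1(1) q2(1) by (simp_all add: poly_0_coeff_0)
  with q1 q2 coeff_mult_1[of q1 q2]
  show "\<exists>q. (\<forall>e. f (curve ca cb cx cy e) * g (curve ca cb cx cy e) = poly q e) \<and>
      coeff q 1 = chain_rule_term (\<lambda>p. f p * Ga p + g p * Da p) (\<lambda>p. f p * Gb p + g p * Db p)
        (\<lambda>p. f p * Gx p + g p * Dx p) (\<lambda>p. f p * Gy p + g p * Dy p) ca cb cx cy"
    by (intro exI[of _ "q1 * q2"]) (simp add: chain_rule_term_def Let_def algebra_simps)
qed

lemma regular_fun_has_jet:
  assumes "f \<in> regular_fun"
  shows "\<exists>Da Db Dx Dy. Da \<in> regular_fun \<and> Db \<in> regular_fun \<and> Dx \<in> regular_fun \<and> Dy \<in> regular_fun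
    \<and> has_jet f Da Db Dx Dy"
  using assms
proof induction
  case (add f g)
  then obtain Da Db Dx Dy Ga Gb Gx Gy where
    "Da \<in> regular_fun" "Db \<in> regular_fun" "Dx \<in> regular_fun" "Dy \<in> regular_fun" "has_jet f Da Db Dx Dy"
    "Ga \<in> regular_fun" "Gb \<in> regular_fun" "Gx \<in> regular_fun" "Gy \<in> regular_fun" "has_jet g Ga Gb Gx Gy"
    by blast
  then show ?case
    using has_jet_add[of f Da Db Dx Dy g Ga Gb Gx Gy]
    by (intro exI[of _ "\<lambda>p. Da p + Ga p"] exI[of _ "\<lambda>p. Db p + Gb p"] exI[of _ "\<lambda>p. Dx p + Gx p"]
        exI[of _ "\<lambda>p. Dy p + Gy p"]) (simp add: regular_fun.add)
next
  case (mult f g)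
  then obtain Da Db Dx Dy Ga Gb Gx Gy where
    "Da \<in> regular_fun" "Db \<in> regular_fun" "Dx \<in> regular_fun" "Dy \<in> regular_fun" "has_jet f Da Db Dx Dy"
    "Ga \<in> regular_fun" "Gb \<in> regular_fun" "Gx \<in> regular_fun" "Gy \<in> regular_fun" "has_jet g Ga Gb Gx Gy"
    by blast
  with mult.hyps show ?case
    using has_jet_mult[of f Da Db Dx Dy g Ga Gb Gx Gy]
    by (intro exI[of _ "\<lambda>p. f p * Ga p + g p * Da p"] exI[of _ "\<lambda>p. f p * Gb p + g p * Db p"]
        exI[of _ "\<lambda>p. f p * Gx p + g p * Dx p"] exI[of _ "\<lambda>p. f p * Gy p + g p * Dy p"])
      (simp add: regular_fun.add regular_fun.mult)
qed (use has_jet_const has_jet_coords regular_fun.const in fast)+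

lemma regular_fun_along_curve:
  "f \<in> regular_fun \<Longrightarrow> \<exists>q. \<forall>e. f (curve ca cb cx cy e) = poly q e"
  using regular_fun_has_jet unfolding has_jet_def by meson

lemma regular_fun_diagonal: "f \<in> regular_fun \<Longrightarrow> \<exists>P. \<forall>s. f (s, s, 0, 0) = poly P s"
  using regular_fun_along_curve[of f "[:0,1:]" "[:0,1:]" 0 0] by (simp add: curve_def)

lemma regular_fun_stationary_along_curve:
  assumes "f \<in> regular_fun" and "\<forall>e. f (curve ca cb cx cy e) = poly q e"
    and "coeff ca 1 = 0" "coeff cb 1 = 0" "coeff cx 1 = 0" "coeff cy 1 = 0"
  shows "coeff q 1 = 0"
proof -
  obtain Da Db Dx Dy where "has_jet f Da Db Dx Dy"
    using regular_fun_has_jet[OF assms(1)] by blast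
  then obtain q' where "\<forall>e. f (curve ca cb cx cy e) = poly q' e" "coeff q' 1 = 0"
    using assms(3-) unfolding has_jet_def chain_rule_term_def Let_def by force
  moreover have "q = q'"
    using assms(2) calculation(1) by (metis poly_eq_poly_eq_iff ext)
  ultimately show ?thesis by simp
qed

definition has_vertical_derivative :: "(Y \<Rightarrow> complex) \<Rightarrow> (Y \<Rightarrow> complex) \<Rightarrow> (Y \<Rightarrow> complex) \<Rightarrow> bool"
  where "has_vertical_derivative f Dx Dy \<longleftrightarrow> (\<forall>a b X Y. \<exists>q. (\<forall>e. f (a, b, e * X, e * Y) = poly q e) \<and>
    coeff q 1 = Dx (a, b, 0, 0) * X + Dy (a, b, 0, 0) * Y)"

lemma regular_fun_has_vertical_derivative:
  assumes "f \<in> regular_fun"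
  shows "\<exists>Dx Dy. Dx \<in> regular_fun \<and> Dy \<in> regular_fun \<and> has_vertical_derivative f Dx Dy"
proof -
  obtain Da Db Dx Dy where D: "Dx \<in> regular_fun" "Dy \<in> regular_fun" "has_jet f Da Db Dx Dy"
    using regular_fun_has_jet[OF assms] by blast
  have "has_vertical_derivative f Dx Dy"
    unfolding has_vertical_derivative_def
  proof (intro allI)
    fix a b X Y
    show "\<exists>q. (\<forall>e. f (a, b, e * X, e * Y) = poly q e) \<and>
        coeff q 1 = Dx (a, b, 0, 0) * X + Dy (a, b, 0, 0) * Y"
      using D(3)[unfolded has_jet_def, rule_format, of "[:a:]" "[:b:]" "[:0, X:]" "[:0, Y:]"]
      by (simp add: curve_def chain_rule_term_def Let_def mult.commute)
  qed
  with D show ?thesis by blast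
qed

lemma vertical_derivative_coeff:
  assumes "has_vertical_derivative f Dx Dy" and "\<forall>e. f (a, b, e * X, e * Y) = poly q e"
  shows "coeff q 1 = Dx (a, b, 0, 0) * X + Dy (a, b, 0, 0) * Y"
proof -
  obtain q' where "\<forall>e. f (a, b, e * X, e * Y) = poly q' e"
      "coeff q' 1 = Dx (a, b, 0, 0) * X + Dy (a, b, 0, 0) * Y"
    using assms(1) unfolding has_vertical_derivative_def by blast
  moreover have "q = q'"
    using assms(2) calculation(1) by (metis poly_eq_poly_eq_iff ext)
  ultimately show ?thesis by simp
qed

lemma vertical_derivative_scale:
  assumes D: "has_vertical_derivative f Dx Dy"
    and rel: "\<And>e. f (a, b, e * X, e * Y) = k * f (a', b', e * X', e * Y')"
  shows "Dx (a, b, 0, 0) * X + Dy (a, b, 0, 0) * Y =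
    k * (Dx (a', b', 0, 0) * X' + Dy (a', b', 0, 0) * Y')"
proof -
  obtain q' where q': "\<forall>e. f (a', b', e * X', e * Y') = poly q' e"
      "coeff q' 1 = Dx (a', b', 0, 0) * X' + Dy (a', b', 0, 0) * Y'"
    using D unfolding has_vertical_derivative_def by blast
  have "\<forall>e. f (a, b, e * X, e * Y) = poly (smult k q') e"
    using q'(1) rel by simp
  from vertical_derivative_coeff[OF D this] q'(2) show ?thesis by simp
qed

lemma vertical_derivative_cnj:
  assumes D: "has_vertical_derivative f Dx Dy" and G: "has_vertical_derivative g Gx Gy"
    and rel: "\<And>r. f (a, b, of_real r * X, of_real r * Y) =
      cnj (g (a', b', of_real r * X', of_real r * Y'))"
  shows "Dx (a, b, 0, 0) * X + Dy (a, b, 0, 0) * Y =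
    cnj (Gx (a', b', 0, 0) * X' + Gy (a', b', 0, 0) * Y')"
proof -
  obtain q q' where q: "\<forall>e. f (a, b, e * X, e * Y) = poly q e"
      "coeff q 1 = Dx (a, b, 0, 0) * X + Dy (a, b, 0, 0) * Y"
    and q': "\<forall>e. g (a', b', e * X', e * Y') = poly q' e"
      "coeff q' 1 = Gx (a', b', 0, 0) * X' + Gy (a', b', 0, 0) * Y'"
    using D G unfolding has_vertical_derivative_def by meson
  have "q = map_poly cnj q'"
  proof (rule poly_eqI_infinite[OF infinite_Reals])
    fix z :: complex assume "z \<in> \<real>"
    then obtain r where "z = of_real r" by (auto elim: Reals_cases)
    then show "poly q z = poly (map_poly cnj q') z"
      using rel[of r] q(1) q'(1) by simp
  qed
  with q(2) q'(2) show ?thesis by (simp add: coeff_map_poly)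
qed

section \<open>Equivalence of forms\<close>

lemma regular_automorphism_inv: "regular_automorphism \<psi> \<Longrightarrow> regular_automorphism (inv \<psi>)"
  by (simp add: regular_automorphism_def bij_imp_bij_inv inv_inv_eq)

lemma regular_automorphism_comp:
  assumes "regular_automorphism \<phi>" "regular_automorphism \<psi>"
  shows "regular_automorphism (\<psi> \<circ> \<phi>)"
  using assms by (auto simp: regular_automorphism_def o_inv_distrib intro: bij_comp regular_map_comp)

lemma equivariant_inv:
  assumes "bij \<psi>" "equivariant \<psi>"
  shows "equivariant (inv \<psi>)"
  unfolding equivariant_def
proof (intro allI impI)
  fix t p assume "(t::complex) \<noteq> 0"
  then have "\<psi> (act t (inv \<psi> p)) = act t (\<psi> (inv \<psi> p))"
    using assms(2) unfolding equivariant_def by blast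
  then have "\<psi> (act t (inv \<psi> p)) = act t p"
    using assms(1) by (simp add: bij_is_surj surj_f_inv_f)
  then show "inv \<psi> (act t p) = act t (inv \<psi> p)"
    using assms(1) by (metis bij_inv_eq_iff)
qed

lemma equivariant_comp: "equivariant \<phi> \<Longrightarrow> equivariant \<psi> \<Longrightarrow> equivariant (\<psi> \<circ> \<phi>)"
  unfolding equivariant_def comp_def by metis

lemma forms_equivalent_sym:
  assumes "forms_equivalent \<mu>1 \<mu>2"
  shows "forms_equivalent \<mu>2 \<mu>1"
proof -
  obtain \<psi> where \<psi>: "regular_automorphism \<psi>" "equivariant \<psi>" "\<mu>2 = \<psi> \<circ> \<mu>1 \<circ> inv \<psi>"
    using assms unfolding forms_equivalent_def by blast
  then have bij: "bij \<psi>" by (simp add: regular_automorphism_def)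
  then have "inv \<psi> (\<mu>2 (\<psi> p)) = \<mu>1 p" for p
    using \<psi>(3) by (simp add: bij_is_inj)
  then have "\<mu>1 = inv \<psi> \<circ> \<mu>2 \<circ> inv (inv \<psi>)"
    using bij by (simp add: fun_eq_iff inv_inv_eq)
  with \<psi> bij show ?thesis
    unfolding forms_equivalent_def by (blast intro: regular_automorphism_inv equivariant_inv)
qed

lemma forms_equivalent_trans:
  assumes "forms_equivalent \<mu>1 \<mu>2" "forms_equivalent \<mu>2 \<mu>3"
  shows "forms_equivalent \<mu>1 \<mu>3"
proof -
  obtain \<phi> \<psi> where \<phi>: "regular_automorphism \<phi>" "equivariant \<phi>" "\<mu>2 = \<phi> \<circ> \<mu>1 \<circ> inv \<phi>"
    and \<psi>: "regular_automorphism \<psi>" "equivariant \<psi>" "\<mu>3 = \<psi> \<circ> \<mu>2 \<circ> inv \<psi>"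
    using assms unfolding forms_equivalent_def by blast
  then have "inv (\<psi> \<circ> \<phi>) = inv \<phi> \<circ> inv \<psi>"
    by (simp add: regular_automorphism_def o_inv_distrib)
  then have "\<mu>3 = (\<psi> \<circ> \<phi>) \<circ> \<mu>1 \<circ> inv (\<psi> \<circ> \<phi>)"
    using \<phi>(3) \<psi>(3) by (simp add: o_assoc)
  with \<phi> \<psi> show ?thesis
    unfolding forms_equivalent_def by (blast intro: regular_automorphism_comp equivariant_comp)
qed

lemma forms_equivalentI:
  assumes "regular_map \<psi>" "regular_map \<psi>'" and "\<And>p. \<psi>' (\<psi> p) = p" "\<And>p. \<psi> (\<psi>' p) = p"
    and "equivariant \<psi>" and "\<And>p. \<mu>2 (\<psi> p) = \<psi> (\<mu>1 p)"
  shows "forms_equivalent \<mu>1 \<mu>2"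
proof -
  have "inv \<psi> = \<psi>'"
    by (rule inv_equality) (use assms(3,4) in auto)
  moreover have "bij \<psi>"
    using assms(3,4) by (metis bijI')
  moreover have "\<mu>2 = \<psi> \<circ> \<mu>1 \<circ> \<psi>'"
    unfolding fun_eq_iff o_def by (metis assms(4,6))
  ultimately have "regular_automorphism \<psi>" and "\<mu>2 = \<psi> \<circ> \<mu>1 \<circ> inv \<psi>"
    using assms(1,2) by (simp_all add: regular_automorphism_def)
  with assms(5) show ?thesis
    unfolding forms_equivalent_def by blast
qed

lemma forms_equivalent_refl: "forms_equivalent \<mu> \<mu>"
proof -
  have "regular_map id"
    by (simp add: regular_map_def regular_fun_coords)
  then show ?thesis
    unfolding forms_equivalent_def regular_automorphism_def equivariant_def by force
qed

lemma equiv_forms_equivalent: "equiv UNIV {(\<mu>1, \<mu>2). forms_equivalent \<mu>1 \<mu>2}"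
  by (rule equivI) (auto simp: refl_on_def sym_def trans_def forms_equivalent_refl
      intro: forms_equivalent_sym forms_equivalent_trans)

lemma card_quotient_eq_2:
  assumes "equiv UNIV E" and "x \<in> A" "y \<in> A" "(x, y) \<notin> E" and "\<And>z. z \<in> A \<Longrightarrow> (z, x) \<in> E \<or> (z, y) \<in> E"
  shows "card (A // E) = 2"
proof -
  have "A // E = {E `` {x}, E `` {y}}"
    using assms unfolding quotient_def by (auto simp: equiv_class_eq_iff[OF assms(1)])
  moreover have "E `` {x} \<noteq> E `` {y}"
    using assms(1,4) by (simp add: eq_equiv_class_iff)
  ultimately show ?thesis by simp
qed

section \<open>Explicit equivalences between the forms \<mu>_h\<close>

abbreviation complexify :: "real poly \<Rightarrow> complex poly"
  where "complexify \<equiv> map_poly complex_of_real"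

lemma cnj_poly_complexify: "cnj (poly (complexify p) z) = poly (complexify p) (cnj z)"
  by (rule poly_cnj_real) (simp add: coeff_map_poly)

lemma mu_apply:
  "mu h (a, b, x, y) = (let T = cnj a * cnj b; H = poly (complexify h) T in
    (cnj b, cnj a, (1 - T * H^2) * cnj y + cnj b ^ 3 * H ^ 3 * cnj x,
     - (cnj a ^ 3 * H ^ 3) * cnj y + (1 + T * H^2 + (T * H^2)^2) * cnj x))"
  by (simp add: mu_def phi_def mu0_def Let_def numeral_3_eq_3 mult.commute power2_eq_square)

lemma mu_0: "mu 0 = mu0"
  by (auto simp: fun_eq_iff mu_apply mu0_def)

text \<open>For H' = H + T D the matrix below has determinant 1; the inverse map is given by
  its adjugate.\<close>
definition mu_conjugator :: "real poly \<Rightarrow> real poly \<Rightarrow> real poly \<Rightarrow> Y \<Rightarrow> Y"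
  where "mu_conjugator h h' d = (\<lambda>(a, b, x, y). let T = a * b;
    H = poly (complexify h) T; H' = poly (complexify h') T; D = poly (complexify d) T in
    (a, b, (1 - T^2 * H * D) * x + a^3 * D * y,
      b^3 * D * (1 - T * H * H') * x + (1 + T^2 * H' * D) * y))"

definition mu_conjugator_inv :: "real poly \<Rightarrow> real poly \<Rightarrow> real poly \<Rightarrow> Y \<Rightarrow> Y"
  where "mu_conjugator_inv h h' d = (\<lambda>(a, b, x, y). let T = a * b;
    H = poly (complexify h) T; H' = poly (complexify h') T; D = poly (complexify d) T in
    (a, b, (1 + T^2 * H' * D) * x - a^3 * D * y,
      (1 - T^2 * H * D) * y - b^3 * D * (1 - T * H * H') * x))"

lemma mu_conjugator_adjugate:
  fixes a b x y H H' D :: complex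
  assumes "H' = H + (a*b) * D"
  shows "(1 + (a*b)^2 * H' * D) * ((1 - (a*b)^2 * H * D) * x + a^3 * D * y) - a^3 * D *
           (b^3 * D * (1 - (a*b) * H * H') * x + (1 + (a*b)^2 * H' * D) * y) = x"
    "(1 - (a*b)^2 * H * D) * (b^3 * D * (1 - (a*b) * H * H') * x + (1 + (a*b)^2 * H' * D) * y)
     - b^3 * D * (1 - (a*b) * H * H') * ((1 - (a*b)^2 * H * D) * x + a^3 * D * y) = y"
    "(1 - (a*b)^2 * H * D) * ((1 + (a*b)^2 * H' * D) * x - a^3 * D * y) + a^3 * D *
       ((1 - (a*b)^2 * H * D) * y - b^3 * D * (1 - (a*b) * H * H') * x) = x"
    "b^3 * D * (1 - (a*b) * H * H') * ((1 + (a*b)^2 * H' * D) * x - a^3 * D * y) +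
       (1 + (a*b)^2 * H' * D) * ((1 - (a*b)^2 * H * D) * y - b^3 * D * (1 - (a*b) * H * H') * x) = y"
  by (simp_all add: assms algebra_simps power2_eq_square power3_eq_cube)

lemma forms_equivalent_mu_same_constant_term:
  assumes "poly h 0 = poly h' 0"
  shows "forms_equivalent (mu h) (mu h')"
proof -
  obtain c d where "h' - h = pCons c d" by (cases "h' - h") auto
  moreover have "c = 0"
    using assms arg_cong[OF calculation, of "\<lambda>p. poly p 0"] by simp
  ultimately have "h' = h + pCons 0 d"
    by (metis add_diff_cancel_left' diff_add_cancel)
  then have "complexify h' = complexify h + complexify (pCons 0 d)"
    by (intro poly_eqI) (simp add: coeff_map_poly)
  then have H': "poly (complexify h') z = poly (complexify h) z + z * poly (complexify d) z" for z
    by (simp add: map_poly_pCons)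
  show ?thesis
  proof (rule forms_equivalentI[of "mu_conjugator h h' d" "mu_conjugator_inv h h' d"])
    show "regular_map (mu_conjugator h h' d)" "regular_map (mu_conjugator_inv h h' d)"
      unfolding regular_map_def mu_conjugator_def mu_conjugator_inv_def Let_def case_prod_beta
        fst_conv snd_conv
      by (intro conjI regular_fun_closed)+
    show "mu_conjugator_inv h h' d (mu_conjugator h h' d p) = p" for p
      using mu_conjugator_adjugate(1,2)[OF H']
      by (cases p) (simp add: mu_conjugator_def mu_conjugator_inv_def Let_def)
    show "mu_conjugator h h' d (mu_conjugator_inv h h' d p) = p" for p
      using mu_conjugator_adjugate(3,4)[OF H']
      by (cases p) (simp add: mu_conjugator_def mu_conjugator_inv_def Let_def)
    show "equivariant (mu_conjugator h h' d)"
      unfolding equivariant_def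
    proof (intro allI impI)
      fix t :: complex and p :: Y assume t: "t \<noteq> 0"
      obtain a b x y where p: "p = (a, b, x, y)" by (cases p)
      have "t^2 * a * (inverse t ^ 2 * b) = a * b" using t by (simp add: field_simps)
      with t show "mu_conjugator h h' d (act t p) = act t (mu_conjugator h h' d p)"
        unfolding p by (simp add: mu_conjugator_def act_def Let_def) (simp add: field_simps)
    qed
    show "mu h' (mu_conjugator h h' d p) = mu_conjugator h h' d (mu h p)" for p
    proof -
      obtain a b x y where p: "p = (a, b, x, y)" by (cases p)
      show ?thesis
        unfolding p
        by (simp add: mu_apply mu_conjugator_def Let_def cnj_poly_complexify H'
            mult.commute[of "cnj b" "cnj a"])
          (intro conjI; algebra)
    qed
  qed
qed

lemma poly_complexify_pcompose_linear:
  "poly (complexify (pcompose h [:0, r:])) z = poly (complexify h) (of_real r * z)"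
proof (induction h)
  case (pCons a p)
  have "pcompose (pCons a p) [:0, r:] = pCons a (smult r (pcompose p [:0, r:]))"
    by (simp add: pcompose_pCons)
  with pCons show ?case
    by (simp add: map_poly_pCons map_poly_smult)
qed simp

text \<open>Scaling (a, b) by c multiplies T = ab by c^2; the matching change of h keeps M_h intact.\<close>
definition rescale_poly :: "real poly \<Rightarrow> real \<Rightarrow> real poly"
  where "rescale_poly h c = smult (1 / c) (pcompose h [:0, 1 / c^2:])"

lemma forms_equivalent_mu_rescale:
  assumes "c \<noteq> 0"
  shows "forms_equivalent (mu h) (mu (rescale_poly h c))"
proof -
  have H: "poly (complexify (rescale_poly h c)) (of_real c * A * (of_real c * B)) =
      poly (complexify h) (A * B) / of_real c" for A B
    using assms unfolding rescale_poly_def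
    by (simp add: map_poly_smult poly_complexify_pcompose_linear field_simps power2_eq_square)
  show ?thesis
  proof (rule forms_equivalentI[of "\<lambda>(a, b, x, y). (of_real c * a, of_real c * b, x, y)"
        "\<lambda>(a, b, x, y). (a / of_real c, b / of_real c, x, y)"])
    show "regular_map (\<lambda>(a, b, x, y). (complex_of_real c * a, complex_of_real c * b, x, y))"
      "regular_map (\<lambda>(a, b, x, y). (a / complex_of_real c, b / complex_of_real c, x, y))"
      unfolding regular_map_def case_prod_beta fst_conv snd_conv divide_inverse
      by (intro conjI regular_fun_closed regular_fun.mult[OF _ regular_fun.const])+
    show "equivariant (\<lambda>(a, b, x, y). (complex_of_real c * a, complex_of_real c * b, x, y))"
      unfolding equivariant_def act_def by (auto simp: algebra_simps)
    show "mu (rescale_poly h c) ((\<lambda>(a, b, x, y). (complex_of_real c * a, complex_of_real c * b, x, y)) p) =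
        (\<lambda>(a, b, x, y). (complex_of_real c * a, complex_of_real c * b, x, y)) (mu h p)" for p
      using assms
      by (cases p) (simp add: mu_apply Let_def H, simp add: field_simps power2_eq_square power3_eq_cube)
  qed (use assms in auto)
qed

lemma forms_equivalent_mu_mu1:
  assumes "poly h 0 \<noteq> 0"
  shows "forms_equivalent (mu h) (mu 1)"
proof -
  have "poly (rescale_poly h (poly h 0)) 0 = poly 1 0"
    using assms by (simp add: rescale_poly_def poly_pcompose)
  then have "forms_equivalent (mu (rescale_poly h (poly h 0))) (mu 1)"
    by (rule forms_equivalent_mu_same_constant_term)
  with forms_equivalent_mu_rescale[OF assms] show ?thesis
    by (rule forms_equivalent_trans)
qed

section \<open>Forms conjugate to \<mu>_0\<close>

locale intertwiner =
  fixes h :: "real poly" and \<psi> :: "Y \<Rightarrow> Y"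
  assumes automorphism: "regular_automorphism \<psi>"
    and equivariant: "equivariant \<psi>"
    and intertwines: "mu0 = \<psi> \<circ> mu h \<circ> inv \<psi>"
begin

definition psi_a :: "Y \<Rightarrow> complex" where "psi_a p = fst (\<psi> p)"
definition psi_b :: "Y \<Rightarrow> complex" where "psi_b p = fst (snd (\<psi> p))"
definition psi_x :: "Y \<Rightarrow> complex" where "psi_x p = fst (snd (snd (\<psi> p)))"
definition psi_y :: "Y \<Rightarrow> complex" where "psi_y p = snd (snd (snd (\<psi> p)))"

lemma psi_components: "\<psi> p = (psi_a p, psi_b p, psi_x p, psi_y p)"
  by (simp add: psi_a_def psi_b_def psi_x_def psi_y_def)

lemma inv_psi_psi [simp]: "inv \<psi> (\<psi> p) = p"
  using automorphism by (simp add: regular_automorphism_def bij_is_inj)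

lemma mu0_psi: "mu0 (\<psi> p) = \<psi> (mu h p)"
  using intertwines by (metis comp_apply inv_psi_psi)

lemma regular_components:
  "psi_a \<in> regular_fun" "psi_b \<in> regular_fun" "psi_x \<in> regular_fun" "psi_y \<in> regular_fun"
  using automorphism unfolding regular_automorphism_def regular_map_def
    psi_a_def[abs_def] psi_b_def[abs_def] psi_x_def[abs_def] psi_y_def[abs_def] by simp_all

lemma regular_inv_components:
  "(\<lambda>p. fst (snd (snd (inv \<psi> p)))) \<in> regular_fun" "(\<lambda>p. snd (snd (snd (inv \<psi> p)))) \<in> regular_fun"
  using automorphism unfolding regular_automorphism_def regular_map_def by simp_all

lemma psi_act: "t \<noteq> 0 \<Longrightarrow> \<psi> (act t p) = act t (\<psi> p)"
  using equivariant unfolding equivariant_def by blast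

lemma psi_x_act: "t \<noteq> 0 \<Longrightarrow> psi_x (act t p) = t^3 * psi_x p"
  using psi_act[of t p] unfolding psi_x_def by (simp add: act_def case_prod_beta)

lemma psi_ab_fibre_even:
  "psi_a (a, b, - x, - y) = psi_a (a, b, x, y)" "psi_b (a, b, - x, - y) = psi_b (a, b, x, y)"
  using psi_act[of "-1" "(a, b, x, y)"] by (simp_all add: psi_a_def psi_b_def act_def case_prod_beta)

end

locale linearized_intertwiner = intertwiner +
  fixes Dx Dy Gx Gy :: "Y \<Rightarrow> complex"
  assumes regular_derivatives:
      "Dx \<in> regular_fun" "Dy \<in> regular_fun" "Gx \<in> regular_fun" "Gy \<in> regular_fun"
    and psi_x_derivative: "has_vertical_derivative psi_x Dx Dy"
    and psi_y_derivative: "has_vertical_derivative psi_y Gx Gy"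
begin

definition \<alpha> :: "complex poly" where "\<alpha> = (SOME P. \<forall>s. Dx (s, s, 0, 0) = poly P s)"
definition \<beta> :: "complex poly" where "\<beta> = (SOME P. \<forall>s. Dy (s, s, 0, 0) = poly P s)"
definition \<gamma> :: "complex poly" where "\<gamma> = (SOME P. \<forall>s. Gx (s, s, 0, 0) = poly P s)"
definition \<delta> :: "complex poly" where "\<delta> = (SOME P. \<forall>s. Gy (s, s, 0, 0) = poly P s)"

lemma poly_diagonal_entries:
  "Dx (s, s, 0, 0) = poly \<alpha> s" "Dy (s, s, 0, 0) = poly \<beta> s"
  "Gx (s, s, 0, 0) = poly \<gamma> s" "Gy (s, s, 0, 0) = poly \<delta> s"
proof -
  have "\<forall>s. Dx (s, s, 0, 0) = poly \<alpha> s" "\<forall>s. Dy (s, s, 0, 0) = poly \<beta> s"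
    "\<forall>s. Gx (s, s, 0, 0) = poly \<gamma> s" "\<forall>s. Gy (s, s, 0, 0) = poly \<delta> s"
    unfolding \<alpha>_def \<beta>_def \<gamma>_def \<delta>_def
    by (rule someI_ex, rule regular_fun_diagonal, rule regular_derivatives)+
  then show "Dx (s, s, 0, 0) = poly \<alpha> s" "Dy (s, s, 0, 0) = poly \<beta> s"
    "Gx (s, s, 0, 0) = poly \<gamma> s" "Gy (s, s, 0, 0) = poly \<delta> s"
    by blast+
qed

lemma \<alpha>_even: "poly \<alpha> (- s) = poly \<alpha> s" and \<beta>_odd: "poly \<beta> (- s) = - poly \<beta> s"
proof -
  have "Dx (- s, - s, 0, 0) * (- \<i> * X) + Dy (- s, - s, 0, 0) * (\<i> * Y) =
      - \<i> * (Dx (s, s, 0, 0) * X + Dy (s, s, 0, 0) * Y)" for X Y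
  proof (rule vertical_derivative_scale[OF psi_x_derivative])
    fix e
    have "act \<i> (s, s, e * X, e * Y) = (- s, - s, e * (- \<i> * X), e * (\<i> * Y))"
      by (simp add: act_def power3_eq_cube algebra_simps)
    with psi_x_act[of \<i> "(s, s, e * X, e * Y)"]
    show "psi_x (- s, - s, e * (- \<i> * X), e * (\<i> * Y)) = - \<i> * psi_x (s, s, e * X, e * Y)"
      by (simp add: power3_eq_cube)
  qed
  from this[of 1 0] this[of 0 "- \<i>"] show "poly \<alpha> (- s) = poly \<alpha> s" "poly \<beta> (- s) = - poly \<beta> s"
    by (simp_all add: poly_diagonal_entries mult.commute mult.left_commute)
qed

text \<open>Weight 3 of x forces \<beta>(s) = s^3 R(s^2): compare the diagonal point (s, s) with (1, s^2)
  through the action of a square root of s.\<close>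
lemma coeff_\<beta>_1: "coeff \<beta> 1 = 0"
proof -
  obtain R where R: "\<forall>v. Dy (1, v, 0, 0) = poly R v"
    using regular_fun_along_curve[OF regular_derivatives(2), of "[:1:]" "[:0, 1:]" 0 0]
    by (auto simp: curve_def)
  have "poly \<beta> s = s^3 * poly R (s^2)" for s
  proof (cases "s = 0")
    case True
    then show ?thesis using \<beta>_odd[of 0] by simp
  next
    case False
    define t where "t = csqrt s"
    have t: "t^2 = s" "t \<noteq> 0" using False by (simp_all add: t_def)
    have "Dx (s, s, 0, 0) * 0 + Dy (s, s, 0, 0) * 1 =
        t^3 * (Dx (1, s^2, 0, 0) * 0 + Dy (1, s^2, 0, 0) * t^3)"
    proof (rule vertical_derivative_scale[OF psi_x_derivative])
      fix e
      have "act t (1, s^2, e * 0, e * t^3) = (s, s, e * 0, e * 1)"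
        using t by (simp add: act_def field_simps power2_eq_square power3_eq_cube flip: t(1))
      with psi_x_act[OF t(2), of "(1, s^2, e * 0, e * t^3)"]
      show "psi_x (s, s, e * 0, e * 1) = t^3 * psi_x (1, s^2, e * 0, e * t^3)" by simp
    qed
    moreover have "t^3 * t^3 = s^3"
      by (simp flip: t(1) power_add power_mult)
    ultimately show ?thesis
      using R by (simp add: poly_diagonal_entries)
  qed
  then have "\<beta> = pCons 0 (pCons 0 (pCons 0 (pcompose R [:0, 0, 1:])))"
    by (simp add: poly_eq_poly_eq_iff[symmetric] fun_eq_iff poly_pcompose power2_eq_square power3_eq_cube)
  then show ?thesis by simp
qed

lemma diagonal_reality:
  fixes r :: real
  defines "s \<equiv> complex_of_real r"
  defines "H \<equiv> poly (complexify h) (s * s)"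
  shows "poly \<gamma> s =
      cnj (poly \<alpha> s) * (s^3 * H^3) + cnj (poly \<beta> s) * (1 + s * s * H^2 + (s * s * H^2)^2)"
    and "poly \<delta> s = cnj (poly \<alpha> s) * (1 - s * s * H^2) - cnj (poly \<beta> s) * (s^3 * H^3)"
proof -
  have real: "cnj s = s" "cnj H = H"
    by (simp_all add: s_def H_def cnj_poly_complexify)
  have key: "poly \<alpha> s * ((1 - s * s * H^2) * cnj Y + s^3 * H^3 * cnj X)
      + poly \<beta> s * (- (s^3 * H^3) * cnj Y + (1 + s * s * H^2 + (s * s * H^2)^2) * cnj X)
      = cnj (poly \<gamma> s * X + poly \<delta> s * Y)" for X Y
  proof -
    have "psi_x (s, s, of_real e * ((1 - s * s * H^2) * cnj Y + s^3 * H^3 * cnj X),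
          of_real e * (- (s^3 * H^3) * cnj Y + (1 + s * s * H^2 + (s * s * H^2)^2) * cnj X))
        = cnj (psi_y (s, s, of_real e * X, of_real e * Y))" for e
    proof -
      have "mu h (s, s, of_real e * X, of_real e * Y) =
          (s, s, of_real e * ((1 - s * s * H^2) * cnj Y + s^3 * H^3 * cnj X),
           of_real e * (- (s^3 * H^3) * cnj Y + (1 + s * s * H^2 + (s * s * H^2)^2) * cnj X))"
        using real by (simp add: mu_apply Let_def H_def algebra_simps)
      then show ?thesis
        using mu0_psi[of "(s, s, of_real e * X, of_real e * Y)"]
        by (simp add: psi_components mu0_def)
    qed
    from vertical_derivative_cnj[OF psi_x_derivative psi_y_derivative this] show ?thesis
      by (simp add: poly_diagonal_entries)
  qed
  have "poly \<gamma> s = cnj (poly \<alpha> s * (s^3 * H^3) + poly \<beta> s * (1 + s * s * H^2 + (s * s * H^2)^2))"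
    "poly \<delta> s = cnj (poly \<alpha> s * (1 - s * s * H^2) - poly \<beta> s * (s^3 * H^3))"
    using arg_cong[OF key[of 1 0], of cnj] arg_cong[OF key[of 0 1], of cnj] by simp_all
  then show
    "poly \<gamma> s = cnj (poly \<alpha> s) * (s^3 * H^3) + cnj (poly \<beta> s) * (1 + s * s * H^2 + (s * s * H^2)^2)"
    "poly \<delta> s = cnj (poly \<alpha> s) * (1 - s * s * H^2) - cnj (poly \<beta> s) * (s^3 * H^3)"
    by (simp_all add: real)
qed

text \<open>If (X, Y) were in the kernel, \<psi> would map the line (s, s, eX, eY) to a curve that is
  stationary at e = 0 (its a- and b-components are even in e); composing with the regular
  inverse would then make the line itself stationary.\<close>
lemma diagonal_kernel_trivial:
  assumes "poly \<alpha> s * X + poly \<beta> s * Y = 0" and "poly \<gamma> s * X + poly \<delta> s * Y = 0"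
  shows "X = 0 \<and> Y = 0"
proof -
  let ?line = "curve [:s:] [:s:] [:0, X:] [:0, Y:]"
  have line: "?line e = (s, s, e * X, e * Y)" for e
    by (simp add: curve_def mult.commute)
  obtain qa qb qx qy where q: "\<forall>e. psi_a (?line e) = poly qa e" "\<forall>e. psi_b (?line e) = poly qb e"
      "\<forall>e. psi_x (?line e) = poly qx e" "\<forall>e. psi_y (?line e) = poly qy e"
    using regular_fun_along_curve regular_components by meson
  have "poly qa (- e) = poly qa e" "poly qb (- e) = poly qb e" for e
    using q(1,2)[rule_format, of "- e"] q(1,2)[rule_format, of e] psi_ab_fibre_even[of s s "e * X" "e * Y"]
    by (simp_all add: line)
  then have "coeff qa 1 = 0" "coeff qb 1 = 0"
    by (simp_all add: coeff_even_poly)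
  moreover have "coeff qx 1 = 0" "coeff qy 1 = 0"
    using q(3,4) assms
      vertical_derivative_coeff[OF psi_x_derivative] vertical_derivative_coeff[OF psi_y_derivative]
    by (simp_all add: line poly_diagonal_entries)
  moreover have "inv \<psi> (curve qa qb qx qy e) = ?line e" for e
  proof -
    have "curve qa qb qx qy e = \<psi> (?line e)"
      using q by (simp add: psi_components curve_def[of qa qb qx qy])
    then show ?thesis by simp
  qed
  ultimately have "coeff [:0, X:] 1 = 0" "coeff [:0, Y:] 1 = 0"
    using regular_fun_stationary_along_curve[OF regular_inv_components(1), of qa qb qx qy "[:0, X:]"]
      regular_fun_stationary_along_curve[OF regular_inv_components(2), of qa qb qx qy "[:0, Y:]"]
    by (simp_all add: curve_def)
  then show ?thesis by simp
qed

lemma diagonal_det_nonzero: "poly \<alpha> s * poly \<delta> s - poly \<beta> s * poly \<gamma> s \<noteq> 0"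
  by (metis singular_2x2_kernel diagonal_kernel_trivial)

lemma degree_diagonal_det: "degree (\<alpha> * \<delta> - \<beta> * \<gamma>) = 0"
  using alg_closed_imp_poly_has_root[of "\<alpha> * \<delta> - \<beta> * \<gamma>"] diagonal_det_nonzero by auto

definition h_sq :: "complex poly" where "h_sq = pcompose (complexify h) [:0, 0, 1:]"

text \<open>On real s, with H = h(s^2), these are \<alpha> + \<beta> s H and \<alpha> s H + \<beta> (1 + s^2 H^2); by the
  reality relations the determinant of the linear part is |w_even|^2 - |w_odd|^2.\<close>
definition w_even :: "complex poly" where "w_even = \<alpha> + \<beta> * [:0, 1:] * h_sq"
definition w_odd :: "complex poly"
  where "w_odd = \<alpha> * [:0, 1:] * h_sq + \<beta> * (1 + [:0, 0, 1:] * h_sq^2)"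

lemma poly_h_sq: "poly h_sq z = poly (complexify h) (z * z)"
  by (simp add: h_sq_def poly_pcompose)

lemma diagonal_det_herm_square: "\<alpha> * \<delta> - \<beta> * \<gamma> = herm_square w_even - herm_square w_odd"
proof (rule poly_eqI_infinite[OF infinite_Reals])
  fix z :: complex assume "z \<in> \<real>"
  then obtain r where z: "z = of_real r" by (auto elim: Reals_cases)
  define H where "H = poly (complexify h) (z * z)"
  define a b where "a = poly \<alpha> z" and "b = poly \<beta> z"
  have real: "cnj z = z" "cnj H = H"
    by (simp_all add: z H_def cnj_poly_complexify)
  have "poly (\<alpha> * \<delta> - \<beta> * \<gamma>) z =
      a * (cnj a * (1 - z * z * H^2) - cnj b * (z^3 * H^3))
      - b * (cnj a * (z^3 * H^3) + cnj b * (1 + z * z * H^2 + (z * z * H^2)^2))"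
    using diagonal_reality[of r] by (simp add: a_def b_def z H_def)
  also have "\<dots> = (a + b * (z * H)) * cnj (a + b * (z * H))
      - (a * (z * H) + b * (1 + z * z * H^2)) * cnj (a * (z * H) + b * (1 + z * z * H^2))"
    by (simp add: real) algebra
  also have "\<dots> = poly (herm_square w_even - herm_square w_odd) z"
    unfolding z poly_diff poly_herm_square_of_real
    by (simp add: w_even_def w_odd_def poly_h_sq a_def b_def H_def z algebra_simps)
  finally show "poly (\<alpha> * \<delta> - \<beta> * \<gamma>) z = poly (herm_square w_even - herm_square w_odd) z" .
qed

lemma w_odd_eq_0: "w_odd = 0"
proof (rule herm_square_diff_even_odd)
  show "poly w_even (- z) = poly w_even z" "poly w_odd (- z) = - poly w_odd z" for z
    by (simp_all add: w_even_def w_odd_def poly_h_sq \<alpha>_even \<beta>_odd algebra_simps)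
  show "degree (herm_square w_even - herm_square w_odd) = 0"
    using degree_diagonal_det by (simp flip: diagonal_det_herm_square)
qed

lemma constant_term_zero: "poly h 0 = 0"
proof (rule ccontr)
  assume h0: "poly h 0 \<noteq> 0"
  have "coeff h_sq 0 = of_real (poly h 0)"
    using poly_h_sq[of 0] by (simp add: poly_0_coeff_0 coeff_map_poly)
  then have "coeff w_odd 1 = poly \<alpha> 0 * of_real (poly h 0) + coeff \<beta> 1"
    by (simp add: w_odd_def coeff_mult_1[unfolded One_nat_def] coeff_mult_0 poly_0_coeff_0)
  with w_odd_eq_0 coeff_\<beta>_1 h0 have "poly \<alpha> 0 = 0"
    by simp
  moreover have "poly \<beta> 0 = 0"
    using \<beta>_odd[of 0] by simp
  ultimately show False
    using diagonal_det_nonzero[of 0] by simp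
qed

end

lemma forms_equivalent_mu_mu0_constant_term:
  assumes "forms_equivalent (mu h) mu0"
  shows "poly h 0 = 0"
proof -
  obtain \<psi> where "regular_automorphism \<psi>" "equivariant \<psi>" "mu0 = \<psi> \<circ> mu h \<circ> inv \<psi>"
    using assms unfolding forms_equivalent_def by blast
  then interpret intertwiner h \<psi>
    by unfold_locales
  obtain Dx Dy Gx Gy where "Dx \<in> regular_fun" "Dy \<in> regular_fun" "has_vertical_derivative psi_x Dx Dy"
      "Gx \<in> regular_fun" "Gy \<in> regular_fun" "has_vertical_derivative psi_y Gx Gy"
    using regular_fun_has_vertical_derivative regular_components by meson
  then interpret linearized_intertwiner h \<psi> Dx Dy Gx Gy
    by unfold_locales
  show ?thesis
    by (rule constant_term_zero)
qed

theorem mainTheorem2: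
  shows "(\<forall>h :: real poly. forms_equivalent (mu h) mu0 \<longleftrightarrow> poly h 0 = 0)
     \<and> \<not> forms_equivalent mu0 (mu 1)
     \<and> card (range mu // {(\<mu>1, \<mu>2). forms_equivalent \<mu>1 \<mu>2}) = 2"
proof -
  have mu0_class: "forms_equivalent (mu h) mu0 \<longleftrightarrow> poly h 0 = 0" for h
    using forms_equivalent_mu_mu0_constant_term forms_equivalent_mu_same_constant_term[of h 0]
    by (auto simp: mu_0)
  moreover have "\<not> forms_equivalent mu0 (mu 1)"
    using mu0_class[of 1] forms_equivalent_sym by auto
  moreover have "card (range mu // {(\<mu>1, \<mu>2). forms_equivalent \<mu>1 \<mu>2}) = 2"
  proof (rule card_quotient_eq_2[OF equiv_forms_equivalent])
    show "mu 0 \<in> range mu" "mu 1 \<in> range mu" by simp_all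
    show "(mu 0, mu 1) \<notin> {(\<mu>1, \<mu>2). forms_equivalent \<mu>1 \<mu>2}"
      using calculation(2) by (simp add: mu_0)
    show "(\<mu>, mu 0) \<in> {(\<mu>1, \<mu>2). forms_equivalent \<mu>1 \<mu>2} \<or>
        (\<mu>, mu 1) \<in> {(\<mu>1, \<mu>2). forms_equivalent \<mu>1 \<mu>2}" if "\<mu> \<in> range mu" for \<mu>
      using that mu0_class forms_equivalent_mu_mu1 by (auto simp: mu_0)
  qed
  ultimately show ?thesis by blast
qed

end
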